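(* Let $G_0$ be a non-abelian finite simple group such that the exact sequence $1\to\mathrm{Inn}(G_0)\to\mathrm{Aut}(G_0)\to\mathrm{Out}(G_0)\to1$ splits. Then for every integer $N\ge1$ and every finite group $G$, every extension of $G_0^N$ by $G$ is a semidirect product $G_0^N\rtimes G$ (i.e. every exact sequence $1\to G_0^N\to\Gamma\to G\to1$ splits).
   Context: A group $\Gamma$ is an extension of $N$ by $H$ if there is an exact sequence $1\to N\to\Gamma\to H\to1$. $\mathrm{Inn}$, $\mathrm{Aut}$, $\mathrm{Out}$ denote inner, all, and outer automorphism groups. *)

theory Defs
  imports "HOL-Algebra.Algebra"
begin

definition conj_auto :: "('a, 'b) monoid_scheme \<Rightarrow> 'a \<Rightarrow> ('a \<Rightarrow> 'a)" where
  "conj_auto G g = (\<lambda>x\<in>carrier G. g \<otimes>\<^bsub>G\<^esub> x \<otimes>\<^bsub>G\<^esub> inv\<^bsub>G\<^esub> g)"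

definition inn_auto :: "('a, 'b) monoid_scheme \<Rightarrow> ('a \<Rightarrow> 'a) set" where
  "inn_auto G = conj_auto G ` carrier G"

definition InnGroup :: "('a, 'b) monoid_scheme \<Rightarrow> ('a \<Rightarrow> 'a) monoid" where
  "InnGroup G = (AutoGroup G)\<lparr>carrier := inn_auto G\<rparr>"

definition OutGroup :: "('a, 'b) monoid_scheme \<Rightarrow> ('a \<Rightarrow> 'a) set monoid" where
  "OutGroup G = AutoGroup G Mod inn_auto G"

definition out_proj :: "('a, 'b) monoid_scheme \<Rightarrow> ('a \<Rightarrow> 'a) \<Rightarrow> ('a \<Rightarrow> 'a) set" where
  "out_proj G a = inn_auto G #>\<^bsub>AutoGroup G\<^esub> a"

definition aut_out_splits :: "('a, 'b) monoid_scheme \<Rightarrow> bool" where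
  "aut_out_splits G \<longleftrightarrow>
     (\<exists>s \<in> hom (OutGroup G) (AutoGroup G). \<forall>c \<in> carrier (OutGroup G). out_proj G (s c) = c)"

definition group_extension ::
  "('a, 'x) monoid_scheme \<Rightarrow> ('b, 'y) monoid_scheme \<Rightarrow> ('c, 'z) monoid_scheme
     \<Rightarrow> ('a \<Rightarrow> 'b) \<Rightarrow> ('b \<Rightarrow> 'c) \<Rightarrow> bool" where
  "group_extension N Gam H i p \<longleftrightarrow>
     group N \<and> group Gam \<and> group H \<and>
     i \<in> hom N Gam \<and> inj_on i (carrier N) \<and>
     p \<in> hom Gam H \<and> p ` carrier Gam = carrier H \<and>
     i ` carrier N = kernel Gam H p"

definition extension_splits ::
  "('b, 'y) monoid_scheme \<Rightarrow> ('c, 'z) monoid_scheme \<Rightarrow> ('b \<Rightarrow> 'c) \<Rightarrow> bool" where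
  "extension_splits Gam H p \<longleftrightarrow> (\<exists>s \<in> hom H Gam. \<forall>h \<in> carrier H. p (s h) = h)"

end

theory Submission
  imports Defs
begin

text \<open>
  Write P = G0^N with factors F_k. As G0 is non-abelian simple, every non-trivial normal
  subgroup of P contains some F_k; hence an automorphism \<alpha> of P permutes the factors,
  \<alpha>(F_k) = F_{\<pi>(k)}, and induces automorphisms \<alpha>_k of G0, with (\<alpha>\<beta>)_k = \<alpha>_{\<pi>_\<beta>(k)} \<beta>_k.
  Because G0 is centreless, \<alpha> is determined by \<pi> and the \<alpha>_k.
  A section s of Aut(G0) \<rightarrow> Out(G0) gives the idempotent endomorphism a \<mapsto> s(a Inn(G0)) of
  Aut(G0), which kills Inn(G0). The elements of \<Gamma> whose conjugation action on P has all its
  components fixed by this endomorphism form a subgroup S. Multiplying an element on the left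
  by a suitable element of P corrects all of its components, so S meets every coset of P;
  an element of P acts by inner automorphisms, so it lies in S only if it is central, i.e.
  trivial. Hence S is a complement of P.
\<close>

section \<open>Automorphism groups\<close>

lemma carrier_AutoGroup: "carrier (AutoGroup G) = auto G"
  by (simp add: AutoGroup_def)

lemma one_AutoGroup: "\<one>\<^bsub>AutoGroup G\<^esub> = (\<lambda>x\<in>carrier G. x)"
  by (simp add: AutoGroup_def BijGroup_def)

lemma mult_AutoGroup:
  "a \<in> auto G \<Longrightarrow> b \<in> auto G \<Longrightarrow> a \<otimes>\<^bsub>AutoGroup G\<^esub> b = compose (carrier G) a b"
  by (simp add: AutoGroup_def BijGroup_def auto_def)

lemma auto_eqI:
  assumes "a \<in> auto G" "b \<in> auto G" "\<And>x. x \<in> carrier G \<Longrightarrow> a x = b x"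
  shows "a = b"
  using assms by (auto simp: auto_def Bij_def intro: extensionalityI)

lemma auto_closed: "a \<in> auto G \<Longrightarrow> x \<in> carrier G \<Longrightarrow> a x \<in> carrier G"
  by (auto simp: auto_def hom_def)

lemma auto_iff_iso: "a \<in> auto G \<longleftrightarrow> a \<in> iso G G \<and> a \<in> extensional (carrier G)"
  by (auto simp: auto_def iso_def Bij_def)

context group
begin

lemma compose_auto:
  assumes "a \<in> auto G" "b \<in> auto G" shows "compose (carrier G) a b \<in> auto G"
proof -
  interpret A: group "AutoGroup G" by (rule AutoGroup)
  show ?thesis
    using A.m_closed[of a b] assms by (simp add: carrier_AutoGroup mult_AutoGroup)
qed

lemma conj_auto_apply [simp]: "x \<in> carrier G \<Longrightarrow> conj_auto G g x = g \<otimes> x \<otimes> inv g"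
  by (simp add: conj_auto_def)

lemma conj_auto_in_auto:
  assumes g: "g \<in> carrier G" shows "conj_auto G g \<in> auto G"
proof -
  have "conj_auto G g \<in> hom G G"
  proof (rule homI)
    fix x y assume "x \<in> carrier G" "y \<in> carrier G"
    then show "conj_auto G g (x \<otimes> y) = conj_auto G g x \<otimes> conj_auto G g y"
      using g by (simp add: m_assoc) (simp add: m_assoc[symmetric])
  qed (use g in simp)
  moreover have "conj_auto G g ` carrier G = carrier G"
  proof (intro equalityI subsetI)
    fix y assume y: "y \<in> carrier G"
    have "conj_auto G g (inv g \<otimes> y \<otimes> g) = y"
      using g y by (simp add: m_assoc[symmetric]) (simp add: m_assoc)
    then show "y \<in> conj_auto G g ` carrier G"
      using g y by (metis image_eqI inv_closed m_closed)
  qed (use g in auto)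
  moreover have "inj_on (conj_auto G g) (carrier G)"
    using g by (auto simp: inj_on_def)
  ultimately show ?thesis
    by (auto simp: auto_iff_iso iso_iff conj_auto_def)
qed

lemma conj_auto_mult:
  assumes g: "g \<in> carrier G" and h: "h \<in> carrier G"
  shows "conj_auto G (g \<otimes> h) = conj_auto G g \<otimes>\<^bsub>AutoGroup G\<^esub> conj_auto G h"
  using g h conj_auto_in_auto compose_auto
  by (auto intro!: auto_eqI simp: mult_AutoGroup compose_def m_assoc inv_mult_group)

lemma conj_auto_one: "conj_auto G \<one> = \<one>\<^bsub>AutoGroup G\<^esub>"
  by (auto simp: conj_auto_def one_AutoGroup intro!: restrict_ext)

lemma conj_auto_eq_one_imp_central:
  assumes c: "c \<in> carrier G" and eq: "conj_auto G c = \<one>\<^bsub>AutoGroup G\<^esub>" and y: "y \<in> carrier G"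
  shows "c \<otimes> y = y \<otimes> c"
proof -
  have "c \<otimes> y \<otimes> inv c = y"
    using fun_cong[OF eq, of y] c y by (simp add: one_AutoGroup)
  then show ?thesis
    using c y by (metis m_closed inv_solve_right)
qed

lemma inn_auto_subgroup: "subgroup (inn_auto G) (AutoGroup G)"
proof -
  interpret A: group "AutoGroup G" by (rule AutoGroup)
  have "inv\<^bsub>AutoGroup G\<^esub> conj_auto G g = conj_auto G (inv g)" if g: "g \<in> carrier G" for g
    using g conj_auto_in_auto
    by (intro A.inv_equality) (simp_all add: carrier_AutoGroup conj_auto_mult[symmetric] conj_auto_one)
  then show ?thesis
    using conj_auto_in_auto
    by (intro A.subgroupI) (auto simp: inn_auto_def carrier_AutoGroup conj_auto_mult[symmetric])
qed

lemma auto_conj_auto_commute: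
  assumes a: "a \<in> auto G" and g: "g \<in> carrier G"
  shows "a \<otimes>\<^bsub>AutoGroup G\<^esub> conj_auto G g = conj_auto G (a g) \<otimes>\<^bsub>AutoGroup G\<^esub> a"
proof -
  interpret h: group_hom G G a
    using a by (simp add: group_hom_def group_hom_axioms_def auto_def)
  show ?thesis
    using a g conj_auto_in_auto compose_auto auto_closed
    by (auto intro!: auto_eqI simp: mult_AutoGroup compose_def)
qed

lemma inn_auto_normal: "inn_auto G \<lhd> AutoGroup G"
proof -
  interpret A: group "AutoGroup G" by (rule AutoGroup)
  have conj: "a \<otimes>\<^bsub>AutoGroup G\<^esub> conj_auto G g \<otimes>\<^bsub>AutoGroup G\<^esub> inv\<^bsub>AutoGroup G\<^esub> a = conj_auto G (a g)"
    if a: "a \<in> auto G" and g: "g \<in> carrier G" for a g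
  proof -
    have "a \<in> carrier (AutoGroup G)" "conj_auto G (a g) \<in> carrier (AutoGroup G)"
      using a conj_auto_in_auto[OF auto_closed[OF a g]] by (auto simp: carrier_AutoGroup)
    then show ?thesis
      using a g by (simp add: auto_conj_auto_commute A.m_assoc)
  qed
  then show ?thesis
    unfolding A.normal_inv_iff
  proof (intro conjI ballI inn_auto_subgroup)
    fix a c assume "a \<in> carrier (AutoGroup G)" "c \<in> inn_auto G"
    then show "a \<otimes>\<^bsub>AutoGroup G\<^esub> c \<otimes>\<^bsub>AutoGroup G\<^esub> inv\<^bsub>AutoGroup G\<^esub> a \<in> inn_auto G"
      using conj by (auto simp: carrier_AutoGroup inn_auto_def intro!: imageI intro: auto_closed)
  qed
qed

lemma out_proj_in_carrier: "a \<in> auto G \<Longrightarrow> out_proj G a \<in> carrier (OutGroup G)"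
  by (auto simp: OutGroup_def carrier_FactGroup out_proj_def carrier_AutoGroup)

lemma out_proj_mult:
  assumes "a \<in> auto G" "b \<in> auto G"
  shows "out_proj G (a \<otimes>\<^bsub>AutoGroup G\<^esub> b) = out_proj G a \<otimes>\<^bsub>OutGroup G\<^esub> out_proj G b"
  using normal.r_coset_hom_Mod[OF inn_auto_normal] assms
  by (simp add: out_proj_def OutGroup_def hom_mult carrier_AutoGroup)

lemma out_proj_conj_auto: "c \<in> carrier G \<Longrightarrow> out_proj G (conj_auto G c) = \<one>\<^bsub>OutGroup G\<^esub>"
  using group.coset_join2[OF AutoGroup _ inn_auto_subgroup] conj_auto_in_auto
  by (simp add: out_proj_def OutGroup_def inn_auto_def carrier_AutoGroup)

lemma center_normal: "{z \<in> carrier G. \<forall>y\<in>carrier G. z \<otimes> y = y \<otimes> z} \<lhd> G"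
  (is "?Z \<lhd> G")
proof -
  have inv_comm: "inv z \<otimes> y = y \<otimes> inv z" if z: "z \<in> ?Z" and y: "y \<in> carrier G" for z y
  proof -
    have zc: "z \<in> carrier G" and zy: "z \<otimes> y = y \<otimes> z" using z y by auto
    have "inv z \<otimes> y = inv z \<otimes> (y \<otimes> z) \<otimes> inv z"
      using zc y by (simp add: m_assoc)
    also have "\<dots> = y \<otimes> inv z"
      using zc y by (simp add: zy[symmetric] m_assoc[symmetric])
    finally show ?thesis .
  qed
  have mult_comm: "a \<otimes> b \<otimes> y = y \<otimes> (a \<otimes> b)"
    if a: "a \<in> ?Z" and b: "b \<in> ?Z" and y: "y \<in> carrier G" for a b y
  proof -
    have ac: "a \<in> carrier G" and bc: "b \<in> carrier G" and a_comm: "a \<otimes> y = y \<otimes> a"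
      and b_comm: "b \<otimes> y = y \<otimes> b"
      using a b y by auto
    have "a \<otimes> b \<otimes> y = a \<otimes> (y \<otimes> b)"
      using ac bc y by (simp add: m_assoc b_comm)
    also have "\<dots> = y \<otimes> a \<otimes> b"
      using ac bc y by (simp add: m_assoc[symmetric] a_comm)
    also have "\<dots> = y \<otimes> (a \<otimes> b)"
      using ac bc y by (simp add: m_assoc)
    finally show ?thesis .
  qed
  have conj_eq: "x \<otimes> z \<otimes> inv x = z" if x: "x \<in> carrier G" and z: "z \<in> ?Z" for x z
  proof -
    have zc: "z \<in> carrier G" and zx: "x \<otimes> z = z \<otimes> x" using x z by auto
    have "x \<otimes> z \<otimes> inv x = z \<otimes> (x \<otimes> inv x)"
      using x zc by (simp add: zx m_assoc)
    then show ?thesis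
      using x zc by simp
  qed
  have "subgroup ?Z G"
  proof (rule subgroupI)
    have "\<one> \<in> ?Z" by simp
    then show "?Z \<noteq> {}" by blast
  next
    fix a b assume a: "a \<in> ?Z" and b: "b \<in> ?Z"
    then show "inv a \<in> ?Z" "a \<otimes> b \<in> ?Z"
      using inv_comm[OF a] mult_comm[OF a b] by blast+
  qed auto
  then show ?thesis
    unfolding normal_inv_iff using conj_eq by simp
qed

lemma commute_if_commutator_eq_one:
  assumes "a \<in> carrier G" "b \<in> carrier G" "a \<otimes> (b \<otimes> inv a \<otimes> inv b) = \<one>"
  shows "a \<otimes> b = b \<otimes> a"
proof -
  have "inv (inv b) = a \<otimes> b \<otimes> inv a"
    using assms by (intro inv_equality) (simp_all add: m_assoc)
  then have "b \<otimes> a = a \<otimes> b \<otimes> inv a \<otimes> a"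
    using assms(1,2) by simp
  then show ?thesis
    using assms(1,2) by (simp add: m_assoc)
qed

end

lemma (in group_hom) normal_vimage:
  assumes M: "M \<lhd> H" shows "{x \<in> carrier G. h x \<in> M} \<lhd> G"
proof -
  interpret M: normal M H by (rule M)
  have "subgroup {x \<in> carrier G. h x \<in> M} G"
    by (rule G.subgroupI) (auto intro: exI[of _ "\<one>\<^bsub>G\<^esub>"])
  moreover have "h (x \<otimes> y \<otimes> inv x) \<in> M" if "x \<in> carrier G" "y \<in> carrier G" "h y \<in> M" for x y
    using that M.inv_op_closed2 by simp
  ultimately show ?thesis
    by (simp add: G.normal_inv_iff)
qed

lemma (in simple_group) central_eq_one:
  assumes "\<not> comm_group G" and z: "z \<in> carrier G" and "\<And>y. y \<in> carrier G \<Longrightarrow> z \<otimes> y = y \<otimes> z"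
  shows "z = \<one>"
proof -
  let ?Z = "{z \<in> carrier G. \<forall>y\<in>carrier G. z \<otimes> y = y \<otimes> z}"
  have "?Z \<noteq> carrier G"
    using assms(1) group_comm_groupI by blast
  then have "?Z = {\<one>}"
    using no_real_normal_subgroup[OF center_normal] by blast
  then show ?thesis
    using assms(2,3) by blast
qed

locale aut_out_section = group G for G (structure) +
  fixes s
  assumes s_hom: "s \<in> hom (OutGroup G) (AutoGroup G)"
    and s_section: "\<And>c. c \<in> carrier (OutGroup G) \<Longrightarrow> out_proj G (s c) = c"
begin

definition canonical_aut :: "('a \<Rightarrow> 'a) \<Rightarrow> ('a \<Rightarrow> 'a)" where
  "canonical_aut a = s (out_proj G a)"

lemma canonical_aut_in_auto: "a \<in> auto G \<Longrightarrow> canonical_aut a \<in> auto G"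
  unfolding canonical_aut_def using s_hom out_proj_in_carrier
  by (metis hom_in_carrier carrier_AutoGroup)

lemma canonical_aut_mult:
  "a \<in> auto G \<Longrightarrow> b \<in> auto G \<Longrightarrow>
    canonical_aut (a \<otimes>\<^bsub>AutoGroup G\<^esub> b) = canonical_aut a \<otimes>\<^bsub>AutoGroup G\<^esub> canonical_aut b"
  unfolding canonical_aut_def using s_hom by (simp add: out_proj_mult out_proj_in_carrier hom_mult)

lemma canonical_aut_idem: "a \<in> auto G \<Longrightarrow> canonical_aut (canonical_aut a) = canonical_aut a"
  unfolding canonical_aut_def by (simp add: s_section out_proj_in_carrier)

lemma canonical_aut_conj_auto: "c \<in> carrier G \<Longrightarrow> canonical_aut (conj_auto G c) = \<one>\<^bsub>AutoGroup G\<^esub>"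
  unfolding canonical_aut_def
  using hom_one[OF s_hom[unfolded OutGroup_def] normal.factorgroup_is_group[OF inn_auto_normal] AutoGroup]
  by (simp add: out_proj_conj_auto OutGroup_def)

lemma canonical_aut_in_inn_coset:
  assumes a: "a \<in> auto G" shows "\<exists>c\<in>carrier G. canonical_aut a = conj_auto G c \<otimes>\<^bsub>AutoGroup G\<^esub> a"
proof -
  interpret A: group "AutoGroup G" by (rule AutoGroup)
  have "canonical_aut a \<in> out_proj G (canonical_aut a)"
    using A.rcos_self[OF _ inn_auto_subgroup] canonical_aut_in_auto[OF a]
    by (simp add: out_proj_def carrier_AutoGroup)
  also have "out_proj G (canonical_aut a) = out_proj G a"
    unfolding canonical_aut_def using s_section out_proj_in_carrier[OF a] by simp
  finally show ?thesis
    unfolding out_proj_def r_coset_def inn_auto_def by blast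
qed

end

section \<open>Powers of a non-abelian simple group\<close>

declare carrier_product_group [simp del] mult_product_group [simp del] inv_product_group [simp del]
  one_product_group [simp del]

locale nonabelian_simple_power = simple_group G0 for G0 (structure) +
  fixes n :: nat
  assumes noncomm: "\<not> comm_group G0"
begin

abbreviation "I \<equiv> {..<n}"
abbreviation "P \<equiv> product_group I (\<lambda>_. G0)"

definition embed_factor :: "nat \<Rightarrow> 'a \<Rightarrow> nat \<Rightarrow> 'a" where
  "embed_factor k y = (\<lambda>j\<in>I. if j = k then y else \<one>)"

definition factor :: "nat \<Rightarrow> (nat \<Rightarrow> 'a) set" where
  "factor k = embed_factor k ` carrier G0"

lemma group_P: "group P"
  by (simp add: is_group)

lemma carrier_P: "carrier P = (I \<rightarrow>\<^sub>E carrier G0)"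
  by (simp add: carrier_product_group)

lemma P_eqI:
  "x \<in> carrier P \<Longrightarrow> y \<in> carrier P \<Longrightarrow> (\<And>j. j \<in> I \<Longrightarrow> x j = y j) \<Longrightarrow> x = y"
  by (auto simp: carrier_P intro: PiE_ext)

lemma P_component_closed: "x \<in> carrier P \<Longrightarrow> j \<in> I \<Longrightarrow> x j \<in> carrier G0"
  by (auto simp: carrier_P)

lemma mult_P_apply: "j \<in> I \<Longrightarrow> (x \<otimes>\<^bsub>P\<^esub> y) j = x j \<otimes> y j"
  by (simp add: mult_product_group)

lemma inv_P_apply: "x \<in> carrier P \<Longrightarrow> j \<in> I \<Longrightarrow> (inv\<^bsub>P\<^esub> x) j = inv (x j)"
  by (simp add: is_group inv_product_group carrier_P)

lemma one_P_apply: "j \<in> I \<Longrightarrow> \<one>\<^bsub>P\<^esub> j = \<one>"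
  by (simp add: one_product_group)

lemma embed_factor_in_carrier: "y \<in> carrier G0 \<Longrightarrow> embed_factor k y \<in> carrier P"
  by (auto simp: embed_factor_def carrier_P)

lemma embed_factor_apply: "j \<in> I \<Longrightarrow> embed_factor k y j = (if j = k then y else \<one>)"
  by (simp add: embed_factor_def)

lemma embed_factor_mult:
  "x \<in> carrier G0 \<Longrightarrow> y \<in> carrier G0 \<Longrightarrow> embed_factor k (x \<otimes> y) = embed_factor k x \<otimes>\<^bsub>P\<^esub> embed_factor k y"
  by (auto simp: embed_factor_def mult_product_group intro!: restrict_ext)

lemma embed_factor_one: "embed_factor k \<one> = \<one>\<^bsub>P\<^esub>"
  by (auto simp: embed_factor_def one_product_group intro!: restrict_ext)

lemma embed_factor_inv: "y \<in> carrier G0 \<Longrightarrow> embed_factor k (inv y) = inv\<^bsub>P\<^esub> (embed_factor k y)"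
  using embed_factor_in_carrier[of y k]
  by (auto simp: is_group inv_product_group embed_factor_def intro!: restrict_ext)

lemma embed_factor_inject: "k \<in> I \<Longrightarrow> embed_factor k x = embed_factor k y \<Longrightarrow> x = y"
  by (metis embed_factor_apply)

lemma factor_subset_carrier: "factor k \<subseteq> carrier P"
  unfolding factor_def using embed_factor_in_carrier by blast

lemma embed_factor_in_factor: "y \<in> carrier G0 \<Longrightarrow> embed_factor k y \<in> factor k"
  by (simp add: factor_def)

lemma factor_iff:
  assumes k: "k \<in> I"
  shows "x \<in> factor k \<longleftrightarrow> x \<in> carrier P \<and> (\<forall>j\<in>I. j \<noteq> k \<longrightarrow> x j = \<one>)"
proof
  assume "x \<in> factor k"
  then obtain y where "y \<in> carrier G0" "x = embed_factor k y"
    by (auto simp: factor_def)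
  then show "x \<in> carrier P \<and> (\<forall>j\<in>I. j \<noteq> k \<longrightarrow> x j = \<one>)"
    using embed_factor_in_carrier[of y k] by (simp add: embed_factor_apply)
next
  assume x: "x \<in> carrier P \<and> (\<forall>j\<in>I. j \<noteq> k \<longrightarrow> x j = \<one>)"
  then have xk: "x k \<in> carrier G0"
    using k by (simp add: P_component_closed)
  have "x = embed_factor k (x k)"
    using x embed_factor_in_carrier[OF xk, of k] by (intro P_eqI) (auto simp: embed_factor_apply)
  then show "x \<in> factor k"
    using embed_factor_in_factor[OF xk] by metis
qed

lemma factor_eq_embed_factor: "k \<in> I \<Longrightarrow> x \<in> factor k \<Longrightarrow> x = embed_factor k (x k)"
  by (auto simp: factor_def embed_factor_apply)

lemma factor_normal:
  assumes k: "k \<in> I" shows "factor k \<lhd> P"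
proof -
  interpret P: group P by (rule group_P)
  have "subgroup (factor k) P"
  proof (rule P.subgroupI)
    fix a b assume "a \<in> factor k" "b \<in> factor k"
    then obtain x y where xy: "x \<in> carrier G0" "a = embed_factor k x" "y \<in> carrier G0" "b = embed_factor k y"
      by (auto simp: factor_def)
    then show "inv\<^bsub>P\<^esub> a \<in> factor k" "a \<otimes>\<^bsub>P\<^esub> b \<in> factor k"
      by (metis embed_factor_inv embed_factor_in_factor inv_closed,
          metis embed_factor_mult embed_factor_in_factor m_closed)
  qed (use factor_subset_carrier in \<open>auto simp: factor_def\<close>)
  moreover have "x \<otimes>\<^bsub>P\<^esub> h \<otimes>\<^bsub>P\<^esub> inv\<^bsub>P\<^esub> x \<in> factor k"
    if x: "x \<in> carrier P" and h: "h \<in> factor k" for x h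
  proof -
    have hc: "h \<in> carrier P" and h1: "\<And>j. j \<in> I \<Longrightarrow> j \<noteq> k \<Longrightarrow> h j = \<one>"
      using h factor_iff[OF k] by auto
    have "x \<otimes>\<^bsub>P\<^esub> h \<otimes>\<^bsub>P\<^esub> inv\<^bsub>P\<^esub> x \<in> carrier P"
      using x hc by (intro P.m_closed P.inv_closed)
    moreover have "(x \<otimes>\<^bsub>P\<^esub> h \<otimes>\<^bsub>P\<^esub> inv\<^bsub>P\<^esub> x) j = \<one>" if "j \<in> I" "j \<noteq> k" for j
      using that x P_component_closed[OF x] by (simp add: h1 mult_P_apply inv_P_apply)
    ultimately show ?thesis
      using factor_iff[OF k] by blast
  qed
  ultimately show ?thesis
    by (simp add: P.normal_inv_iff)
qed

lemma factor_nontrivial: "factor k \<noteq> {\<one>\<^bsub>P\<^esub>}" if "k \<in> I"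
proof -
  obtain y where "y \<in> carrier G0" "y \<noteq> \<one>"
    using simple_not_triv by blast
  then show ?thesis
    using that embed_factor_in_factor[of y k] embed_factor_inject[of k y \<one>]
    by (auto simp: embed_factor_one)
qed

lemma factor_subset_imp_eq:
  assumes k: "k \<in> I" and j: "j \<in> I" and sub: "factor k \<subseteq> factor j" shows "k = j"
proof (rule ccontr)
  assume "k \<noteq> j"
  obtain y where y: "y \<in> carrier G0" "y \<noteq> \<one>"
    using simple_not_triv by blast
  have "embed_factor k y \<in> factor j"
    using sub embed_factor_in_factor[OF y(1)] by blast
  then show False
    using factor_iff[OF j] k y \<open>k \<noteq> j\<close> by (auto simp: embed_factor_apply)
qed

lemma embed_factor_hom: "embed_factor k \<in> hom G0 P"
  by (intro homI) (simp_all add: embed_factor_in_carrier embed_factor_mult)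

lemma central_component_eq_one:
  assumes z: "z \<in> carrier P" and k: "k \<in> I"
    and comm: "\<And>f. f \<in> factor k \<Longrightarrow> z \<otimes>\<^bsub>P\<^esub> f = f \<otimes>\<^bsub>P\<^esub> z"
  shows "z k = \<one>"
proof (rule central_eq_one[OF noncomm])
  show "z k \<in> carrier G0"
    using z k by (rule P_component_closed)
  fix y assume y: "y \<in> carrier G0"
  have "(z \<otimes>\<^bsub>P\<^esub> embed_factor k y) k = (embed_factor k y \<otimes>\<^bsub>P\<^esub> z) k"
    using comm[OF embed_factor_in_factor[OF y]] by simp
  then show "z k \<otimes> y = y \<otimes> z k"
    using k by (simp add: mult_P_apply embed_factor_apply)
qed

lemma factor_subset_normal:
  assumes M: "M \<lhd> P" and k: "k \<in> I"
    and y: "y \<in> carrier G0" "y \<noteq> \<one>" "embed_factor k y \<in> M"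
  shows "factor k \<subseteq> M"
proof -
  interpret e: group_hom G0 P "embed_factor k"
    by (simp add: group_hom_def group_hom_axioms_def is_group group_P embed_factor_hom)
  have "{y \<in> carrier G0. embed_factor k y \<in> M} \<lhd> G0"
    by (rule e.normal_vimage[OF M])
  moreover have "{y \<in> carrier G0. embed_factor k y \<in> M} \<noteq> {\<one>}"
    using y by blast
  ultimately have "{y \<in> carrier G0. embed_factor k y \<in> M} = carrier G0"
    using no_real_normal_subgroup by blast
  then show ?thesis
    by (auto simp: factor_def)
qed

lemma normal_subgroup_contains_factor:
  assumes M: "M \<lhd> P" and nontriv: "M \<noteq> {\<one>\<^bsub>P\<^esub>}" shows "\<exists>k\<in>I. factor k \<subseteq> M"
proof -
  interpret P: group P by (rule group_P)
  interpret M: normal M P by (rule M)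
  obtain m where m: "m \<in> M" "m \<noteq> \<one>\<^bsub>P\<^esub>"
    using nontriv M.one_closed by blast
  have mc: "m \<in> carrier P"
    using m(1) M.subset by blast
  obtain k where k: "k \<in> I" "m k \<noteq> \<one>"
    using m(2) P_eqI[OF mc P.one_closed] by (auto simp: one_P_apply)
  have mk: "m k \<in> carrier G0"
    using mc k(1) by (rule P_component_closed)
  obtain y where y: "y \<in> carrier G0" "m k \<otimes> y \<noteq> y \<otimes> m k"
    using central_eq_one[OF noncomm mk] k(2) by blast
  define e where "e = embed_factor k y"
  have ec: "e \<in> carrier P"
    unfolding e_def using y(1) by (rule embed_factor_in_carrier)
  \<comment> \<open>the commutator of \<open>m\<close> with \<open>e\<close> lies in \<open>M\<close> and in the \<open>k\<close>-th factor, and is non-trivial there\<close>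
  define z where "z = m \<otimes>\<^bsub>P\<^esub> (e \<otimes>\<^bsub>P\<^esub> inv\<^bsub>P\<^esub> m \<otimes>\<^bsub>P\<^esub> inv\<^bsub>P\<^esub> e)"
  have zM: "z \<in> M"
    unfolding z_def using m(1) M.inv_op_closed2[OF ec M.m_inv_closed[OF m(1)]] by simp
  have zc: "z \<in> carrier P"
    using zM M.subset by blast
  have zj: "z j = m j \<otimes> (e j \<otimes> inv (m j) \<otimes> inv (e j))" if "j \<in> I" for j
    using that mc ec by (simp add: z_def mult_P_apply inv_P_apply)
  have "z \<in> factor k"
    unfolding factor_iff[OF k(1)]
    using zc zj mc by (simp add: e_def embed_factor_apply P_component_closed)
  then have "embed_factor k (z k) \<in> M"
    using zM factor_eq_embed_factor[OF k(1)] by metis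
  moreover have "z k \<noteq> \<one>"
    using zj[OF k(1)] commute_if_commutator_eq_one[OF mk y(1)] y(2) k(1)
    by (auto simp: e_def embed_factor_apply)
  ultimately have "factor k \<subseteq> M"
    using factor_subset_normal[OF M k(1)] P_component_closed[OF zc k(1)] by blast
  then show ?thesis
    using k(1) by blast
qed

lemma iso_image_factor_contains_factor:
  assumes \<alpha>: "\<alpha> \<in> iso P P" and k: "k \<in> I" shows "\<exists>j\<in>I. factor j \<subseteq> \<alpha> ` factor k"
proof (rule normal_subgroup_contains_factor)
  show "\<alpha> ` factor k \<lhd> P"
    using iso_normal_subgroup[OF \<alpha> group_P group_P factor_normal[OF k]] .
  have "inj_on \<alpha> (carrier P)"
    using \<alpha> by (simp add: iso_iff)
  then have "\<alpha> ` factor k \<noteq> \<alpha> ` {\<one>\<^bsub>P\<^esub>}"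
    using factor_nontrivial[OF k] inj_on_image_eq_iff[OF _ factor_subset_carrier, of \<alpha> "{\<one>\<^bsub>P\<^esub>}"]
      monoid.one_closed[OF group.is_monoid[OF group_P]] by blast
  then show "\<alpha> ` factor k \<noteq> {\<one>\<^bsub>P\<^esub>}"
    using \<alpha> group_hom.hom_one[of P P \<alpha>]
    by (simp add: iso_imp_homomorphism group_hom_def group_hom_axioms_def group_P)
qed

lemma iso_image_factor:
  assumes \<alpha>: "\<alpha> \<in> iso P P" and k: "k \<in> I" shows "\<exists>j\<in>I. \<alpha> ` factor k = factor j"
proof -
  obtain j where j: "j \<in> I" "factor j \<subseteq> \<alpha> ` factor k"
    using iso_image_factor_contains_factor[OF \<alpha> k] by blast
  define \<beta> where "\<beta> = inv_into (carrier P) \<alpha>"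
  have \<beta>: "\<beta> \<in> iso P P"
    unfolding \<beta>_def using \<alpha> by (rule group.iso_set_sym[OF group_P])
  have inj: "inj_on \<alpha> (carrier P)" and surj: "\<alpha> ` carrier P = carrier P"
    using \<alpha> by (auto simp: iso_iff)
  obtain l where l: "l \<in> I" and l_sub: "factor l \<subseteq> \<beta> ` factor j"
    using iso_image_factor_contains_factor[OF \<beta> j(1)] by blast
  note l_sub
  also have "\<beta> ` factor j \<subseteq> \<beta> ` \<alpha> ` factor k"
    using j(2) by (rule image_mono)
  also have "\<beta> ` \<alpha> ` factor k = factor k"
    unfolding \<beta>_def using inj factor_subset_carrier by (rule inv_into_image_cancel)
  finally have "l = k"
    using factor_subset_imp_eq l k by blast
  then have "\<alpha> ` factor k \<subseteq> \<alpha> ` \<beta> ` factor j"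
    using l_sub by (simp add: image_mono)
  also have "\<alpha> ` \<beta> ` factor j = factor j"
    unfolding \<beta>_def using surj factor_subset_carrier by (rule image_inv_into_cancel)
  finally show ?thesis
    using j by blast
qed

definition factor_perm :: "((nat \<Rightarrow> 'a) \<Rightarrow> nat \<Rightarrow> 'a) \<Rightarrow> nat \<Rightarrow> nat" where
  "factor_perm \<alpha> k = (THE j. j \<in> I \<and> \<alpha> ` factor k = factor j)"

lemma factor_inject: "j \<in> I \<Longrightarrow> k \<in> I \<Longrightarrow> factor j = factor k \<Longrightarrow> j = k"
  using factor_subset_imp_eq by blast

lemma factor_perm:
  assumes \<alpha>: "\<alpha> \<in> iso P P" and k: "k \<in> I"
  shows factor_perm_in: "factor_perm \<alpha> k \<in> I"
    and image_factor: "\<alpha> ` factor k = factor (factor_perm \<alpha> k)"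
proof -
  obtain j where j: "j \<in> I" "\<alpha> ` factor k = factor j"
    using iso_image_factor[OF \<alpha> k] by blast
  have "factor_perm \<alpha> k = j"
    unfolding factor_perm_def by (rule the_equality) (use factor_inject j in auto)
  then show "factor_perm \<alpha> k \<in> I" "\<alpha> ` factor k = factor (factor_perm \<alpha> k)"
    using j by auto
qed

lemma factor_perm_eqI:
  "\<alpha> \<in> iso P P \<Longrightarrow> k \<in> I \<Longrightarrow> j \<in> I \<Longrightarrow> \<alpha> ` factor k = factor j \<Longrightarrow> factor_perm \<alpha> k = j"
  using factor_perm factor_inject by metis

lemma bij_betw_factor_perm:
  assumes \<alpha>: "\<alpha> \<in> iso P P" shows "bij_betw (factor_perm \<alpha>) I I"
proof -
  have "inj_on (factor_perm \<alpha>) I"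
  proof
    fix k l assume k: "k \<in> I" and l: "l \<in> I" and eq: "factor_perm \<alpha> k = factor_perm \<alpha> l"
    have "\<alpha> ` factor k = \<alpha> ` factor l"
      using image_factor[OF \<alpha> k] image_factor[OF \<alpha> l] eq by simp
    moreover have "inj_on \<alpha> (carrier P)"
      using \<alpha> by (simp add: iso_iff)
    ultimately have "factor k = factor l"
      using inj_on_image_eq_iff[OF _ factor_subset_carrier factor_subset_carrier] by blast
    then show "k = l"
      using factor_inject k l by blast
  qed
  then show ?thesis
    using endo_inj_surj[of I "factor_perm \<alpha>"] factor_perm_in[OF \<alpha>] by (auto simp: bij_betw_def)
qed

definition factor_component :: "((nat \<Rightarrow> 'a) \<Rightarrow> nat \<Rightarrow> 'a) \<Rightarrow> nat \<Rightarrow> 'a \<Rightarrow> 'a" where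
  "factor_component \<alpha> k = (\<lambda>y\<in>carrier G0. \<alpha> (embed_factor k y) (factor_perm \<alpha> k))"

lemma iso_group_hom: "\<alpha> \<in> iso P P \<Longrightarrow> group_hom P P \<alpha>"
  by (simp add: group_hom_def group_hom_axioms_def group_P iso_imp_homomorphism)

lemma iso_closed: "\<alpha> \<in> iso P P \<Longrightarrow> x \<in> carrier P \<Longrightarrow> \<alpha> x \<in> carrier P"
  using group_hom.hom_closed[OF iso_group_hom] .

lemma factor_component_closed:
  assumes \<alpha>: "\<alpha> \<in> iso P P" and k: "k \<in> I" and y: "y \<in> carrier G0"
  shows "factor_component \<alpha> k y \<in> carrier G0"
  using P_component_closed[OF iso_closed[OF \<alpha> embed_factor_in_carrier[OF y]] factor_perm_in[OF \<alpha> k]] y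
  by (simp add: factor_component_def)

lemma iso_embed_factor:
  assumes \<alpha>: "\<alpha> \<in> iso P P" and k: "k \<in> I" and y: "y \<in> carrier G0"
  shows "\<alpha> (embed_factor k y) = embed_factor (factor_perm \<alpha> k) (factor_component \<alpha> k y)"
proof -
  have "\<alpha> (embed_factor k y) \<in> factor (factor_perm \<alpha> k)"
    using image_factor[OF \<alpha> k] embed_factor_in_factor[OF y] by blast
  then show ?thesis
    using factor_eq_embed_factor[OF factor_perm_in[OF \<alpha> k]] y by (simp add: factor_component_def)
qed

lemma iso_apply_factor_perm:
  assumes \<alpha>: "\<alpha> \<in> iso P P" and x: "x \<in> carrier P" and k: "k \<in> I"
  shows "\<alpha> x (factor_perm \<alpha> k) = factor_component \<alpha> k (x k)"
proof -
  interpret P: group P by (rule group_P)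
  interpret \<alpha>: group_hom P P \<alpha> by (rule iso_group_hom[OF \<alpha>])
  have xk: "x k \<in> carrier G0"
    using x k by (rule P_component_closed)
  define f where "f = embed_factor k (x k)"
  define x' where "x' = inv\<^bsub>P\<^esub> f \<otimes>\<^bsub>P\<^esub> x"
  have fc: "f \<in> carrier P" and x'c: "x' \<in> carrier P"
    using xk x by (simp_all add: f_def x'_def embed_factor_in_carrier)
  have x_eq: "x = f \<otimes>\<^bsub>P\<^esub> x'"
    using fc x by (simp add: x'_def P.m_assoc[symmetric])
  \<comment> \<open>\<open>x'\<close> has trivial \<open>k\<close>-th component, so it centralises the \<open>k\<close>-th factor, and so does its image\<close>
  have x'k: "x' k = \<one>"
    using fc x k xk by (simp add: x'_def f_def mult_P_apply inv_P_apply embed_factor_apply)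
  have comm: "x' \<otimes>\<^bsub>P\<^esub> g = g \<otimes>\<^bsub>P\<^esub> x'" if g: "g \<in> factor k" for g
  proof (rule P_eqI)
    have gc: "g \<in> carrier P"
      using g factor_subset_carrier by blast
    then show "x' \<otimes>\<^bsub>P\<^esub> g \<in> carrier P" "g \<otimes>\<^bsub>P\<^esub> x' \<in> carrier P"
      using x'c by simp_all
    fix j assume j: "j \<in> I"
    have "x' j \<in> carrier G0" "g j \<in> carrier G0"
      using j x'c gc by (simp_all add: P_component_closed)
    moreover have "j \<noteq> k \<Longrightarrow> g j = \<one>"
      using j g factor_iff[OF k] by blast
    ultimately show "(x' \<otimes>\<^bsub>P\<^esub> g) j = (g \<otimes>\<^bsub>P\<^esub> x') j"
      using j x'k by (cases "j = k") (simp_all add: mult_P_apply)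
  qed
  have "\<alpha> x' \<otimes>\<^bsub>P\<^esub> g' = g' \<otimes>\<^bsub>P\<^esub> \<alpha> x'" if "g' \<in> factor (factor_perm \<alpha> k)" for g'
  proof -
    have "g' \<in> \<alpha> ` factor k"
      using that by (simp add: image_factor[OF \<alpha> k])
    then obtain g where g: "g \<in> factor k" "g' = \<alpha> g"
      by blast
    have gc: "g \<in> carrier P"
      using g(1) factor_subset_carrier by blast
    have "\<alpha> x' \<otimes>\<^bsub>P\<^esub> \<alpha> g = \<alpha> (x' \<otimes>\<^bsub>P\<^esub> g)"
      using gc x'c by simp
    also have "\<dots> = \<alpha> g \<otimes>\<^bsub>P\<^esub> \<alpha> x'"
      using gc x'c by (simp add: comm[OF g(1)])
    finally show ?thesis
      using g(2) by simp
  qed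
  then have "\<alpha> x' (factor_perm \<alpha> k) = \<one>"
    by (rule central_component_eq_one[OF \<alpha>.hom_closed[OF x'c] factor_perm_in[OF \<alpha> k]])
  then have "\<alpha> x (factor_perm \<alpha> k) = \<alpha> f (factor_perm \<alpha> k)"
    using x_eq fc x'c factor_perm_in[OF \<alpha> k]
    by (simp add: mult_P_apply P_component_closed)
  then show ?thesis
    using xk by (simp add: factor_component_def f_def)
qed

lemma factor_component_in_auto:
  assumes \<alpha>: "\<alpha> \<in> iso P P" and k: "k \<in> I" shows "factor_component \<alpha> k \<in> auto G0"
proof -
  interpret \<alpha>: group_hom P P \<alpha> by (rule iso_group_hom[OF \<alpha>])
  have hom: "factor_component \<alpha> k \<in> hom G0 G0"
    using factor_component_closed[OF \<alpha> k] factor_perm_in[OF \<alpha> k]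
    by (intro homI) (simp_all add: factor_component_def embed_factor_mult embed_factor_in_carrier mult_P_apply)
  have "inj_on (factor_component \<alpha> k) (carrier G0)"
  proof
    fix x y assume x: "x \<in> carrier G0" and y: "y \<in> carrier G0"
      and eq: "factor_component \<alpha> k x = factor_component \<alpha> k y"
    then have "\<alpha> (embed_factor k x) = \<alpha> (embed_factor k y)"
      using iso_embed_factor[OF \<alpha> k] by simp
    then show "x = y"
      using \<alpha> x y embed_factor_in_carrier embed_factor_inject[OF k]
      by (metis iso_iff inj_onD)
  qed
  moreover have "carrier G0 \<subseteq> factor_component \<alpha> k ` carrier G0"
  proof
    fix z assume z: "z \<in> carrier G0"
    have "embed_factor (factor_perm \<alpha> k) z \<in> \<alpha> ` factor k"
      using image_factor[OF \<alpha> k] embed_factor_in_factor[OF z] by simp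
    then obtain y where y: "y \<in> carrier G0" "embed_factor (factor_perm \<alpha> k) z = \<alpha> (embed_factor k y)"
      by (auto simp: factor_def)
    then have "factor_component \<alpha> k y = embed_factor (factor_perm \<alpha> k) z (factor_perm \<alpha> k)"
      by (simp add: factor_component_def)
    then have "factor_component \<alpha> k y = z"
      using factor_perm_in[OF \<alpha> k] by (simp add: embed_factor_apply)
    then show "z \<in> factor_component \<alpha> k ` carrier G0"
      using y(1) by blast
  qed
  ultimately show ?thesis
    using hom factor_component_closed[OF \<alpha> k]
    by (auto simp: auto_iff_iso iso_iff factor_component_def)
qed

lemma factor_perm_compose:
  assumes \<alpha>: "\<alpha> \<in> iso P P" and \<beta>: "\<beta> \<in> iso P P" and \<delta>: "\<delta> \<in> iso P P"
    and comp: "\<And>x. x \<in> carrier P \<Longrightarrow> \<delta> x = \<alpha> (\<beta> x)" and k: "k \<in> I"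
  shows "factor_perm \<delta> k = factor_perm \<alpha> (factor_perm \<beta> k)"
proof (rule factor_perm_eqI[OF \<delta> k])
  show "factor_perm \<alpha> (factor_perm \<beta> k) \<in> I"
    using factor_perm_in[OF \<alpha> factor_perm_in[OF \<beta> k]] .
  have "\<delta> ` factor k = \<alpha> ` \<beta> ` factor k"
    using comp factor_subset_carrier by (force simp: image_image)
  then show "\<delta> ` factor k = factor (factor_perm \<alpha> (factor_perm \<beta> k))"
    by (simp add: image_factor[OF \<beta> k] image_factor[OF \<alpha> factor_perm_in[OF \<beta> k]])
qed

lemma factor_component_compose:
  assumes \<alpha>: "\<alpha> \<in> iso P P" and \<beta>: "\<beta> \<in> iso P P" and \<delta>: "\<delta> \<in> iso P P"
    and comp: "\<And>x. x \<in> carrier P \<Longrightarrow> \<delta> x = \<alpha> (\<beta> x)" and k: "k \<in> I"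
  shows "factor_component \<delta> k
    = factor_component \<alpha> (factor_perm \<beta> k) \<otimes>\<^bsub>AutoGroup G0\<^esub> factor_component \<beta> k"
proof -
  have \<beta>k: "factor_perm \<beta> k \<in> I"
    using \<beta> k by (rule factor_perm_in)
  have auto: "factor_component \<alpha> (factor_perm \<beta> k) \<in> auto G0" "factor_component \<beta> k \<in> auto G0"
    using factor_component_in_auto \<alpha> \<beta> \<beta>k k by blast+
  have "factor_component \<delta> k y
      = compose (carrier G0) (factor_component \<alpha> (factor_perm \<beta> k)) (factor_component \<beta> k) y"
    if y: "y \<in> carrier G0" for y
  proof -
    have "factor_component \<delta> k y = \<alpha> (\<beta> (embed_factor k y)) (factor_perm \<alpha> (factor_perm \<beta> k))"
      using y by (simp add: factor_component_def comp embed_factor_in_carrier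
          factor_perm_compose[OF \<alpha> \<beta> \<delta> comp k])
    also have "\<dots> = factor_component \<alpha> (factor_perm \<beta> k) (factor_component \<beta> k y)"
      using y iso_apply_factor_perm[OF \<alpha> iso_closed[OF \<beta> embed_factor_in_carrier[OF y]] \<beta>k]
      by (simp add: factor_component_def)
    finally show ?thesis
      using y by (simp add: compose_def)
  qed
  then show ?thesis
    using auto factor_component_in_auto[OF \<delta> k] compose_auto
    by (simp add: mult_AutoGroup auto_eqI)
qed

lemma factor_perm_conj:
  assumes \<alpha>: "\<alpha> \<in> iso P P" and d: "d \<in> carrier P"
    and conj: "\<And>x. x \<in> carrier P \<Longrightarrow> \<alpha> x = d \<otimes>\<^bsub>P\<^esub> x \<otimes>\<^bsub>P\<^esub> inv\<^bsub>P\<^esub> d" and k: "k \<in> I"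
  shows "factor_perm \<alpha> k = k"
proof (rule factor_perm_eqI[OF \<alpha> k k])
  interpret F: normal "factor k" P by (rule factor_normal[OF k])
  have "\<alpha> ` factor k \<subseteq> factor k"
    using conj d factor_subset_carrier F.inv_op_closed2 by auto
  then have "factor (factor_perm \<alpha> k) \<subseteq> factor k"
    by (simp add: image_factor[OF \<alpha> k])
  then have "factor_perm \<alpha> k = k"
    using factor_subset_imp_eq factor_perm_in[OF \<alpha> k] k by blast
  then show "\<alpha> ` factor k = factor k"
    by (simp add: image_factor[OF \<alpha> k])
qed

lemma factor_component_conj:
  assumes \<alpha>: "\<alpha> \<in> iso P P" and d: "d \<in> carrier P"
    and conj: "\<And>x. x \<in> carrier P \<Longrightarrow> \<alpha> x = d \<otimes>\<^bsub>P\<^esub> x \<otimes>\<^bsub>P\<^esub> inv\<^bsub>P\<^esub> d" and k: "k \<in> I"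
  shows "factor_component \<alpha> k = conj_auto G0 (d k)"
proof (rule auto_eqI)
  show "factor_component \<alpha> k \<in> auto G0"
    using \<alpha> k by (rule factor_component_in_auto)
  show "conj_auto G0 (d k) \<in> auto G0"
    using P_component_closed[OF d k] by (rule conj_auto_in_auto)
  fix y assume y: "y \<in> carrier G0"
  then show "factor_component \<alpha> k y = conj_auto G0 (d k) y"
    using k d embed_factor_in_carrier[OF y] factor_perm_conj[OF \<alpha> d conj k]
    by (simp add: factor_component_def conj mult_P_apply inv_P_apply embed_factor_apply)
qed

end

section \<open>Group extensions\<close>

locale group_ext =
  fixes N :: "('n, 'x) monoid_scheme" and Gam :: "('g, 'y) monoid_scheme"
    and H :: "('h, 'z) monoid_scheme" and i :: "'n \<Rightarrow> 'g" and p :: "'g \<Rightarrow> 'h"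
  assumes extension: "group_extension N Gam H i p"
begin

sublocale Gam: group Gam
  using extension by (simp add: group_extension_def)

sublocale i: group_hom N Gam i
  using extension by (simp add: group_extension_def group_hom_def group_hom_axioms_def)

sublocale p: group_hom Gam H p
  using extension by (simp add: group_extension_def group_hom_def group_hom_axioms_def)

lemma inj_i: "inj_on i (carrier N)"
  and surj_p: "p ` carrier Gam = carrier H"
  and image_i: "i ` carrier N = kernel Gam H p"
  using extension by (simp_all add: group_extension_def)

lemma p_i_eq_one: "x \<in> carrier N \<Longrightarrow> p (i x) = \<one>\<^bsub>H\<^esub>"
  using image_i by (auto simp: kernel_def)

lemma p_eq_imp_i_mult:
  assumes \<gamma>: "\<gamma> \<in> carrier Gam" and \<delta>: "\<delta> \<in> carrier Gam" and eq: "p \<gamma> = p \<delta>"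
  shows "\<exists>c\<in>carrier N. \<delta> = i c \<otimes>\<^bsub>Gam\<^esub> \<gamma>"
proof -
  have "p (\<delta> \<otimes>\<^bsub>Gam\<^esub> inv\<^bsub>Gam\<^esub> \<gamma>) = \<one>\<^bsub>H\<^esub>"
    using \<gamma> \<delta> eq by simp
  then have "\<delta> \<otimes>\<^bsub>Gam\<^esub> inv\<^bsub>Gam\<^esub> \<gamma> \<in> i ` carrier N"
    using \<gamma> \<delta> by (simp add: image_i kernel_def)
  then obtain c where c: "c \<in> carrier N" "i c = \<delta> \<otimes>\<^bsub>Gam\<^esub> inv\<^bsub>Gam\<^esub> \<gamma>"
    by auto
  then have "\<delta> = i c \<otimes>\<^bsub>Gam\<^esub> \<gamma>"
    using \<gamma> \<delta> by (simp add: Gam.m_assoc)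
  then show ?thesis
    using c(1) by blast
qed

definition conj_action :: "'g \<Rightarrow> 'n \<Rightarrow> 'n" where
  "conj_action \<gamma> = (\<lambda>x\<in>carrier N. inv_into (carrier N) i (\<gamma> \<otimes>\<^bsub>Gam\<^esub> i x \<otimes>\<^bsub>Gam\<^esub> inv\<^bsub>Gam\<^esub> \<gamma>))"

lemma conj_in_image_i:
  assumes \<gamma>: "\<gamma> \<in> carrier Gam" and x: "x \<in> carrier N"
  shows "\<gamma> \<otimes>\<^bsub>Gam\<^esub> i x \<otimes>\<^bsub>Gam\<^esub> inv\<^bsub>Gam\<^esub> \<gamma> \<in> i ` carrier N"
proof -
  have "i x \<in> kernel Gam H p"
    using x image_i by blast
  then show ?thesis
    unfolding image_i using \<gamma> by (simp add: kernel_def)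
qed

lemma conj_action:
  assumes \<gamma>: "\<gamma> \<in> carrier Gam" and x: "x \<in> carrier N"
  shows conj_action_closed: "conj_action \<gamma> x \<in> carrier N"
    and i_conj_action: "i (conj_action \<gamma> x) = \<gamma> \<otimes>\<^bsub>Gam\<^esub> i x \<otimes>\<^bsub>Gam\<^esub> inv\<^bsub>Gam\<^esub> \<gamma>"
  using conj_in_image_i[OF \<gamma> x] x by (simp_all add: conj_action_def inv_into_into f_inv_into_f)

lemma conj_action_eqI:
  assumes "\<gamma> \<in> carrier Gam" "x \<in> carrier N" "y \<in> carrier N"
    and "i y = \<gamma> \<otimes>\<^bsub>Gam\<^esub> i x \<otimes>\<^bsub>Gam\<^esub> inv\<^bsub>Gam\<^esub> \<gamma>"
  shows "conj_action \<gamma> x = y"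
  using assms conj_action[OF assms(1,2)] inj_i by (metis inj_onD)

lemma conj_action_mult:
  assumes \<gamma>: "\<gamma> \<in> carrier Gam" and \<delta>: "\<delta> \<in> carrier Gam" and x: "x \<in> carrier N"
  shows "conj_action (\<gamma> \<otimes>\<^bsub>Gam\<^esub> \<delta>) x = conj_action \<gamma> (conj_action \<delta> x)"
  using \<gamma> \<delta> x conj_action_closed
  by (intro conj_action_eqI) (simp_all add: i_conj_action Gam.m_assoc Gam.inv_mult_group)

lemma conj_action_one: "x \<in> carrier N \<Longrightarrow> conj_action \<one>\<^bsub>Gam\<^esub> x = x"
  by (intro conj_action_eqI) simp_all

lemma conj_action_inverse:
  "\<gamma> \<in> carrier Gam \<Longrightarrow> x \<in> carrier N \<Longrightarrow> conj_action (inv\<^bsub>Gam\<^esub> \<gamma>) (conj_action \<gamma> x) = x"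
  using conj_action_mult[of "inv\<^bsub>Gam\<^esub> \<gamma>" \<gamma> x] by (simp add: conj_action_one)

lemma conj_action_iso:
  assumes \<gamma>: "\<gamma> \<in> carrier Gam" shows "conj_action \<gamma> \<in> iso N N"
proof -
  have "conj_action \<gamma> \<in> hom N N"
    using \<gamma> conj_action_closed
    by (intro homI conj_action_eqI) (simp_all add: i_conj_action Gam.m_assoc Gam.inv_solve_left')
  moreover have "inj_on (conj_action \<gamma>) (carrier N)"
    using \<gamma> conj_action_inverse by (metis inj_onI)
  moreover have "conj_action \<gamma> ` carrier N = carrier N"
  proof (intro equalityI subsetI)
    fix z assume z: "z \<in> carrier N"
    then have "conj_action \<gamma> (conj_action (inv\<^bsub>Gam\<^esub> \<gamma>) z) = z"
      using \<gamma> conj_action_inverse[of "inv\<^bsub>Gam\<^esub> \<gamma>" z] by simp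
    then show "z \<in> conj_action \<gamma> ` carrier N"
      using \<gamma> z conj_action_closed by (metis Gam.inv_closed image_eqI)
  qed (use \<gamma> conj_action_closed in blast)
  ultimately show ?thesis
    by (simp add: iso_iff)
qed

lemma conj_action_i:
  "d \<in> carrier N \<Longrightarrow> x \<in> carrier N \<Longrightarrow> conj_action (i d) x = d \<otimes>\<^bsub>N\<^esub> x \<otimes>\<^bsub>N\<^esub> inv\<^bsub>N\<^esub> d"
  by (intro conj_action_eqI) simp_all

end

section \<open>The complement\<close>

lemma extension_splitsI:
  assumes p: "p \<in> hom Gam H" and S: "S \<subseteq> carrier Gam"
    and mult: "\<And>x y. x \<in> S \<Longrightarrow> y \<in> S \<Longrightarrow> x \<otimes>\<^bsub>Gam\<^esub> y \<in> S"
    and bij: "bij_betw p S (carrier H)"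
  shows "extension_splits Gam H p"
proof -
  define s where "s = inv_into S p"
  have s: "s h \<in> S" "p (s h) = h" if "h \<in> carrier H" for h
    using that bij by (auto simp: s_def bij_betw_def inv_into_into f_inv_into_f)
  have "s \<in> hom H Gam"
  proof (rule homI)
    fix x y assume x: "x \<in> carrier H" and y: "y \<in> carrier H"
    show "s x \<in> carrier Gam"
      using s(1)[OF x] S by blast
    have sxy: "s x \<otimes>\<^bsub>Gam\<^esub> s y \<in> S"
      using mult s(1) x y by blast
    have "p (s x \<otimes>\<^bsub>Gam\<^esub> s y) = x \<otimes>\<^bsub>H\<^esub> y"
      using s[OF x] s[OF y] S p by (simp add: hom_mult subsetD)
    then have "s (x \<otimes>\<^bsub>H\<^esub> y) = s (p (s x \<otimes>\<^bsub>Gam\<^esub> s y))"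
      by simp
    also have "\<dots> = s x \<otimes>\<^bsub>Gam\<^esub> s y"
      using bij sxy by (simp add: s_def bij_betw_def inv_into_f_f)
    finally show "s (x \<otimes>\<^bsub>H\<^esub> y) = s x \<otimes>\<^bsub>Gam\<^esub> s y" .
  qed
  then show ?thesis
    unfolding extension_splits_def using s(2) by blast
qed

locale power_extension =
  nonabelian_simple_power G0 n + aut_out_section G0 s +
  group_ext "product_group {..<n} (\<lambda>_. G0)" Gam H i p
  for G0 :: "'a monoid" (structure) and n and s and Gam :: "'b monoid" and H :: "'c monoid" and i p
begin

abbreviation action_component :: "'b \<Rightarrow> nat \<Rightarrow> 'a \<Rightarrow> 'a" where
  "action_component \<gamma> k \<equiv> factor_component (conj_action \<gamma>) k"

lemma action_component_in_auto: "\<gamma> \<in> carrier Gam \<Longrightarrow> k \<in> I \<Longrightarrow> action_component \<gamma> k \<in> auto G0"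
  by (simp add: factor_component_in_auto conj_action_iso)

lemma action_component_mult:
  assumes \<gamma>: "\<gamma> \<in> carrier Gam" and \<delta>: "\<delta> \<in> carrier Gam" and k: "k \<in> I"
  shows "action_component (\<gamma> \<otimes>\<^bsub>Gam\<^esub> \<delta>) k
    = action_component \<gamma> (factor_perm (conj_action \<delta>) k) \<otimes>\<^bsub>AutoGroup G0\<^esub> action_component \<delta> k"
  using \<gamma> \<delta> k by (intro factor_component_compose) (simp_all add: conj_action_iso conj_action_mult)

lemma action_component_i_mult:
  assumes d: "d \<in> carrier P" and \<gamma>: "\<gamma> \<in> carrier Gam" and k: "k \<in> I"
  shows "action_component (i d \<otimes>\<^bsub>Gam\<^esub> \<gamma>) k
    = conj_auto G0 (d (factor_perm (conj_action \<gamma>) k)) \<otimes>\<^bsub>AutoGroup G0\<^esub> action_component \<gamma> k"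
proof -
  have "action_component (i d) (factor_perm (conj_action \<gamma>) k) = conj_auto G0 (d (factor_perm (conj_action \<gamma>) k))"
    using d \<gamma> k factor_perm_in[OF conj_action_iso[OF \<gamma>] k]
    by (intro factor_component_conj) (simp_all add: conj_action_iso conj_action_i)
  then show ?thesis
    using action_component_mult[OF _ \<gamma> k, of "i d"] d by simp
qed

definition complement :: "'b set" where
  "complement = {\<gamma> \<in> carrier Gam. \<forall>k\<in>I. canonical_aut (action_component \<gamma> k) = action_component \<gamma> k}"

lemma complement_mult:
  assumes \<gamma>: "\<gamma> \<in> complement" and \<delta>: "\<delta> \<in> complement" shows "\<gamma> \<otimes>\<^bsub>Gam\<^esub> \<delta> \<in> complement"
proof -
  have \<gamma>c: "\<gamma> \<in> carrier Gam" and \<delta>c: "\<delta> \<in> carrier Gam"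
    using \<gamma> \<delta> by (simp_all add: complement_def)
  have "canonical_aut (action_component (\<gamma> \<otimes>\<^bsub>Gam\<^esub> \<delta>) k) = action_component (\<gamma> \<otimes>\<^bsub>Gam\<^esub> \<delta>) k"
    if k: "k \<in> I" for k
  proof -
    have \<delta>k: "factor_perm (conj_action \<delta>) k \<in> I"
      using conj_action_iso[OF \<delta>c] k by (rule factor_perm_in)
    then show ?thesis
      using \<gamma> \<delta> k
      by (simp add: action_component_mult[OF \<gamma>c \<delta>c k] canonical_aut_mult action_component_in_auto
          \<gamma>c \<delta>c complement_def)
  qed
  then show ?thesis
    using \<gamma>c \<delta>c by (simp add: complement_def)
qed

lemma i_mult_in_complement:
  assumes \<gamma>: "\<gamma> \<in> carrier Gam" shows "\<exists>d\<in>carrier P. i d \<otimes>\<^bsub>Gam\<^esub> \<gamma> \<in> complement"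
proof -
  let ?\<pi> = "factor_perm (conj_action \<gamma>)"
  have \<pi>: "bij_betw ?\<pi> I I"
    using conj_action_iso[OF \<gamma>] by (rule bij_betw_factor_perm)
  have "\<exists>c. c \<in> carrier G0 \<and>
      canonical_aut (action_component \<gamma> k) = conj_auto G0 c \<otimes>\<^bsub>AutoGroup G0\<^esub> action_component \<gamma> k"
    if "k \<in> I" for k
    using canonical_aut_in_inn_coset[OF action_component_in_auto[OF \<gamma> that]] by blast
  then obtain c where c: "\<And>k. k \<in> I \<Longrightarrow> c k \<in> carrier G0 \<and>
      canonical_aut (action_component \<gamma> k) = conj_auto G0 (c k) \<otimes>\<^bsub>AutoGroup G0\<^esub> action_component \<gamma> k"
    by metis
  \<comment> \<open>correct the \<open>k\<close>-th component by \<open>c k\<close>, which sits at position \<open>\<pi> k\<close>\<close>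
  define d where "d = (\<lambda>j\<in>I. c (inv_into I ?\<pi> j))"
  have "inv_into I ?\<pi> j \<in> I" if "j \<in> I" for j
    using bij_betw_apply[OF bij_betw_inv_into[OF \<pi>] that] .
  then have d: "d \<in> carrier P"
    using c by (auto simp: d_def carrier_P)
  have d_\<pi>: "d (?\<pi> k) = c k" if "k \<in> I" for k
    using that bij_betw_apply[OF \<pi> that] bij_betw_imp_inj_on[OF \<pi>] by (simp add: d_def)
  have "canonical_aut (action_component (i d \<otimes>\<^bsub>Gam\<^esub> \<gamma>) k) = action_component (i d \<otimes>\<^bsub>Gam\<^esub> \<gamma>) k"
    if k: "k \<in> I" for k
  proof -
    have "action_component (i d \<otimes>\<^bsub>Gam\<^esub> \<gamma>) k = canonical_aut (action_component \<gamma> k)"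
      using c k by (simp add: action_component_i_mult[OF d \<gamma> k] d_\<pi>[OF k])
    then show ?thesis
      using canonical_aut_idem action_component_in_auto[OF \<gamma> k] by simp
  qed
  then show ?thesis
    using d \<gamma> by (auto simp: complement_def)
qed

lemma image_p_complement: "p ` complement = carrier H"
proof (intro equalityI subsetI)
  fix h assume h: "h \<in> carrier H"
  then have "h \<in> p ` carrier Gam"
    by (simp add: surj_p)
  then obtain \<gamma> where \<gamma>: "\<gamma> \<in> carrier Gam" "p \<gamma> = h"
    by blast
  then obtain d where d: "d \<in> carrier P" "i d \<otimes>\<^bsub>Gam\<^esub> \<gamma> \<in> complement"
    using i_mult_in_complement by blast
  then have "p (i d \<otimes>\<^bsub>Gam\<^esub> \<gamma>) = h"
    using \<gamma> h by (simp add: p_i_eq_one)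
  then show "h \<in> p ` complement"
    using d(2) by blast
qed (auto simp: complement_def)

lemma i_mult_in_complement_imp_one:
  assumes c: "c \<in> carrier P" and \<gamma>: "\<gamma> \<in> complement" and c\<gamma>: "i c \<otimes>\<^bsub>Gam\<^esub> \<gamma> \<in> complement"
  shows "c = \<one>\<^bsub>P\<^esub>"
proof -
  interpret A: group "AutoGroup G0" by (rule AutoGroup)
  have \<gamma>c: "\<gamma> \<in> carrier Gam"
    using \<gamma> by (simp add: complement_def)
  let ?\<pi> = "factor_perm (conj_action \<gamma>)"
  have "c (?\<pi> k) = \<one>" if k: "k \<in> I" for k
  proof -
    have ck: "c (?\<pi> k) \<in> carrier G0"
      using c factor_perm_in[OF conj_action_iso[OF \<gamma>c] k] by (rule P_component_closed)
    have auto: "conj_auto G0 (c (?\<pi> k)) \<in> auto G0" "action_component \<gamma> k \<in> auto G0"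
      using ck conj_auto_in_auto action_component_in_auto[OF \<gamma>c k] by auto
    \<comment> \<open>\<open>canonical_aut\<close> is multiplicative, fixes the components of \<open>\<gamma>\<close> and kills inner automorphisms\<close>
    have "canonical_aut (action_component (i c \<otimes>\<^bsub>Gam\<^esub> \<gamma>) k) = action_component (i c \<otimes>\<^bsub>Gam\<^esub> \<gamma>) k"
      using c\<gamma> k by (simp add: complement_def)
    then have "conj_auto G0 (c (?\<pi> k)) \<otimes>\<^bsub>AutoGroup G0\<^esub> action_component \<gamma> k
        = canonical_aut (conj_auto G0 (c (?\<pi> k)) \<otimes>\<^bsub>AutoGroup G0\<^esub> action_component \<gamma> k)"
      by (simp add: action_component_i_mult[OF c \<gamma>c k])
    also have "\<dots> = action_component \<gamma> k"
      using \<gamma> k auto ck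
      by (simp add: canonical_aut_mult canonical_aut_conj_auto complement_def carrier_AutoGroup)
    finally have "conj_auto G0 (c (?\<pi> k)) = \<one>\<^bsub>AutoGroup G0\<^esub>"
      using auto by (simp add: carrier_AutoGroup)
    then have "\<And>y. y \<in> carrier G0 \<Longrightarrow> c (?\<pi> k) \<otimes> y = y \<otimes> c (?\<pi> k)"
      by (rule conj_auto_eq_one_imp_central[OF ck])
    then show ?thesis
      by (rule central_eq_one[OF noncomm ck])
  qed
  moreover have "j \<in> ?\<pi> ` I" if "j \<in> I" for j
    using that bij_betw_factor_perm[OF conj_action_iso[OF \<gamma>c]] by (simp add: bij_betw_def)
  ultimately have "c j = \<one>" if "j \<in> I" for j
    using that by blast
  then show ?thesis
    using c by (intro P_eqI) (simp_all add: one_P_apply)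
qed

lemma inj_on_p_complement: "inj_on p complement"
proof (rule inj_onI)
  fix \<gamma> \<delta> assume \<gamma>: "\<gamma> \<in> complement" and \<delta>: "\<delta> \<in> complement" and eq: "p \<gamma> = p \<delta>"
  have "\<gamma> \<in> carrier Gam" "\<delta> \<in> carrier Gam"
    using \<gamma> \<delta> by (simp_all add: complement_def)
  then obtain c where c: "c \<in> carrier P" "\<delta> = i c \<otimes>\<^bsub>Gam\<^esub> \<gamma>"
    using p_eq_imp_i_mult eq by blast
  then have "c = \<one>\<^bsub>P\<^esub>"
    using \<gamma> \<delta> by (intro i_mult_in_complement_imp_one) simp_all
  then show "\<gamma> = \<delta>"
    using c \<gamma> by (simp add: complement_def)
qed

theorem extension_splits: "extension_splits Gam H p"
  using complement_mult image_p_complement inj_on_p_complement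
  by (intro extension_splitsI[where S = complement]) (auto simp: complement_def bij_betw_def)

end

theorem proposition2p8:
  fixes G0 :: "'a monoid" and G :: "'c monoid" and Gam :: "'b monoid"
    and N :: nat and i :: "(nat \<Rightarrow> 'a) \<Rightarrow> 'b" and p :: "'b \<Rightarrow> 'c"
  assumes "simple_group G0" and "finite (carrier G0)" and "\<not> comm_group G0"
    and "aut_out_splits G0"
    and "N \<ge> 1"
    and "group G" and "finite (carrier G)"
    and "group_extension (product_group {..<N} (\<lambda>_. G0)) Gam G i p"
  shows "extension_splits Gam G p"
proof -
  obtain s where "s \<in> hom (OutGroup G0) (AutoGroup G0)"
    and "\<forall>c \<in> carrier (OutGroup G0). out_proj G0 (s c) = c"
    using assms(4) unfolding aut_out_splits_def by blast
  then interpret power_extension G0 N s Gam G i p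
    using assms(1,3,8)
    by (simp add: power_extension_def nonabelian_simple_power_def nonabelian_simple_power_axioms_def
        aut_out_section_def aut_out_section_axioms_def group_ext_def simple_group.axioms)
  show ?thesis
    by (rule extension_splits)
qed

end
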